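(* Let $G$ be a finite, simple, connected graph on $n$ vertices, with adjacency entries $a_{uv}$ and degrees $d_u$, and let $0=\lambda_0<\lambda_1\le\dots\le\lambda_{n-1}$ be the eigenvalues of its graph Laplacian. Let $k$ be an integer with $1\le k<n$, and let $\mathfrak{M}_0$ be any set of $n(k-1)$ ordered pairs $(u,v)$ of distinct vertices. Then $$\sum_{j=1}^{k-1}\lambda_j\le \frac{1}{2n}\sum_{(u,v)\in\mathfrak{M}_0}\big(d_u+d_v+2a_{uv}\big).$$
   Context: $a_{uv}=1$ if $u$ and $v$ are adjacent and $0$ otherwise; the graph Laplacian is $H=\mathrm{Deg}-A$ with $\mathrm{Deg}$ the diagonal degree matrix; its eigenvalues are listed with multiplicity in nondecreasing order, indexed from $0$. *)

theory Defs
  imports "Jordan_Normal_Form.Char_Poly"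
begin

definition simple_graph :: "nat \<Rightarrow> (nat \<Rightarrow> nat \<Rightarrow> bool) \<Rightarrow> bool" where
  "simple_graph n E \<longleftrightarrow> (\<forall>u v. E u v \<longrightarrow> u < n \<and> v < n) \<and> (\<forall>u v. E u v \<longrightarrow> E v u) \<and> (\<forall>u. \<not> E u u)"

definition connected_graph :: "nat \<Rightarrow> (nat \<Rightarrow> nat \<Rightarrow> bool) \<Rightarrow> bool" where
  "connected_graph n E \<longleftrightarrow> (\<forall>u<n. \<forall>v<n. E\<^sup>*\<^sup>* u v)"

definition adj :: "(nat \<Rightarrow> nat \<Rightarrow> bool) \<Rightarrow> nat \<Rightarrow> nat \<Rightarrow> real" where
  "adj E u v = (if E u v then 1 else 0)"

definition deg :: "nat \<Rightarrow> (nat \<Rightarrow> nat \<Rightarrow> bool) \<Rightarrow> nat \<Rightarrow> nat" where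
  "deg n E u = card {v. v < n \<and> E u v}"

definition laplacian :: "nat \<Rightarrow> (nat \<Rightarrow> nat \<Rightarrow> bool) \<Rightarrow> real mat" where
  "laplacian n E = mat n n (\<lambda>(i, j). (if i = j then real (deg n E i) else 0) - adj E i j)"

definition eigenvalues_sorted :: "real mat \<Rightarrow> real list \<Rightarrow> bool" where
  "eigenvalues_sorted A xs \<longleftrightarrow> sorted xs \<and> length xs = dim_row A \<and>
     char_poly A = (\<Prod>x\<leftarrow>xs. [:- x, 1:])"

end

theory Submission
  imports Defs "Jordan_Normal_Form.Schur_Decomposition"
begin

(* Write the Laplacian as L = \<Sum>\<^sub>j \<lambda>\<^sub>j p\<^sub>j p\<^sub>j\<^sup>T with an orthonormal eigenbasis (p\<^sub>j); the
  spectral theorem for real symmetric matrices is obtained by deflating along a unit eigenvector.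
  For u \<noteq> v, d\<^sub>u + d\<^sub>v + 2 a\<^sub>u\<^sub>v = (e\<^sub>u - e\<^sub>v)\<^sup>T L (e\<^sub>u - e\<^sub>v) = \<Sum>\<^sub>j \<lambda>\<^sub>j (p\<^sub>j(u) - p\<^sub>j(v))\<^sup>2, so the
  right-hand side is \<Sum>\<^sub>j \<lambda>\<^sub>j q\<^sub>j with q\<^sub>j = (2n)\<^sup>-\<^sup>1 \<Sum>\<^bsub>(u,v)\<in>M0\<^esub> (p\<^sub>j(u) - p\<^sub>j(v))\<^sup>2.
  Each pair carries total weight 2, so \<Sum>\<^sub>j q\<^sub>j = k - 1; bounding the sum over M0 by the sum
  over all pairs gives q\<^sub>j + s\<^sub>j\<^sup>2/n \<le> 1, where s\<^sub>j = \<Sum>\<^sub>u p\<^sub>j(u) and \<Sum>\<^sub>j s\<^sub>j\<^sup>2/n = 1.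
  As L kills the all-ones vector, \<lambda>\<^sub>j s\<^sub>j = 0. Hence the weights q\<^sub>j + s\<^sub>j\<^sup>2/n lie in [0, 1],
  sum to k, and pair with \<lambda> to the right-hand side; such weights dominate the sum of the k
  smallest eigenvalues, and \<lambda>\<^sub>0 \<ge> 0 lets us drop the first one. *)

definition orthonormal_mat :: "nat \<Rightarrow> real mat \<Rightarrow> bool" where
  "orthonormal_mat n P \<longleftrightarrow> P \<in> carrier_mat n n \<and> transpose_mat P * P = 1\<^sub>m n"

lemma orthonormal_mat_right_inverse:
  assumes "orthonormal_mat n P"
  shows "P * transpose_mat P = 1\<^sub>m n"
  using assms mat_mult_left_right_inverse[of "transpose_mat P" n P]
  unfolding orthonormal_mat_def by auto

lemma orthonormal_mat_mult:
  assumes P: "orthonormal_mat n P" and Q: "orthonormal_mat n Q"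
  shows "orthonormal_mat n (P * Q)"
proof -
  have Pc: "P \<in> carrier_mat n n" and Qc: "Q \<in> carrier_mat n n"
    using P Q unfolding orthonormal_mat_def by auto
  have "transpose_mat (P * Q) * (P * Q) = transpose_mat Q * (transpose_mat P * P) * Q"
    using Pc Qc by (simp add: transpose_mult[of _ n n] assoc_mult_mat[of _ n n _ n _ n])
  also have "\<dots> = 1\<^sub>m n"
    using P Q Qc unfolding orthonormal_mat_def by simp
  finally show ?thesis using Pc Qc unfolding orthonormal_mat_def by auto
qed

lemma orthonormal_mat_four_block:
  assumes P: "orthonormal_mat m P"
  shows "orthonormal_mat (Suc m) (four_block_mat (1\<^sub>m 1) (0\<^sub>m 1 m) (0\<^sub>m m 1) P)"
proof -
  have Pc: "P \<in> carrier_mat m m" using P unfolding orthonormal_mat_def by auto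
  have "transpose_mat (four_block_mat (1\<^sub>m 1) (0\<^sub>m 1 m) (0\<^sub>m m 1) P)
      = four_block_mat (1\<^sub>m 1) (0\<^sub>m 1 m) (0\<^sub>m m 1) (transpose_mat P)"
    using Pc by (subst transpose_four_block_mat) auto
  then show ?thesis
    using P Pc unfolding orthonormal_mat_def
    by (auto simp: mult_four_block_mat[of _ 1 1 _ m _ m _ _ 1 _ m])
qed

lemma orthonormal_mat_with_first_col:
  fixes u :: "real vec"
  assumes u: "u \<in> carrier_vec n" and u1: "u \<bullet> u = 1"
  shows "\<exists>W. orthonormal_mat n W \<and> col W 0 = u"
proof -
  have u0: "u \<noteq> 0\<^sub>v n" using u1 by auto
  then have n: "n > 0" using u by (cases n) auto
  interpret cof_vec_space n "TYPE(real)" .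
  define ws where "ws = gram_schmidt n (basis_completion u)"
  from basis_completion[OF u u0] obtain us where
    b: "set (basis_completion u) \<subseteq> carrier_vec n" "distinct (basis_completion u)"
       "\<not> lin_dep (set (basis_completion u))" "basis_completion u = u # us"
    and len: "length (basis_completion u) = n"
    by (metis hd_Cons_tl list.size(3) n not_less_zero)
  from gram_schmidt_result[OF b(1-3) refl, folded ws_def]
  have ws: "set ws \<subseteq> carrier_vec n" "corthogonal ws" "length ws = n"
    by (auto simp: len)
  have ws0: "ws ! 0 = u"
    using gram_schmidt_hd[OF u, of us] ws(3) n unfolding ws_def b(4)
    by (metis hd_conv_nth list.size(3) neq0_conv)
  have ws_pos: "i < n \<Longrightarrow> ws ! i \<bullet> ws ! i > 0" for i
    using corthogonalD[OF ws(2), of i i] ws conjugate_square_ge_0_vec[of "ws ! i"]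
    by (fastforce simp: order.order_iff_strict)
  define W where "W = mat_of_cols n (map (\<lambda>w. (1 / sqrt (w \<bullet> w)) \<cdot>\<^sub>v w) ws)"
  have W: "W \<in> carrier_mat n n" unfolding W_def using ws by auto
  have colW: "i < n \<Longrightarrow> col W i = (1 / sqrt (ws ! i \<bullet> ws ! i)) \<cdot>\<^sub>v ws ! i" for i
    unfolding W_def using ws by (subst col_mat_of_cols) auto
  have "col W i \<bullet> col W j = (if i = j then 1 else 0)" if "i < n" "j < n" for i j
  proof -
    have "ws ! i \<in> carrier_vec n" "ws ! j \<in> carrier_vec n" using that ws by auto
    then have "col W i \<bullet> col W j
        = (1 / sqrt (ws!i \<bullet> ws!i)) * (1 / sqrt (ws!j \<bullet> ws!j)) * (ws ! i \<bullet> ws ! j)"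
      using that by (simp add: colW smult_scalar_prod_distrib scalar_prod_smult_distrib[of _ n])
    then show ?thesis
      using corthogonalD[OF ws(2), of i j] ws(3) that ws_pos[of i] by (auto simp: field_simps)
  qed
  then have "transpose_mat W * W = 1\<^sub>m n"
    using W by (intro eq_matI) auto
  moreover have "col W 0 = u" using colW[OF n] ws0 u1 by simp
  ultimately show ?thesis using W unfolding orthonormal_mat_def by blast
qed

lemma symmetric_congruence:
  fixes A W :: "'a :: comm_semiring_1 mat"
  assumes A: "A \<in> carrier_mat n n" and sym: "transpose_mat A = A" and W: "W \<in> carrier_mat n n"
  shows "transpose_mat (transpose_mat W * A * W) = transpose_mat W * A * W"
proof -
  have WA: "transpose_mat W * A \<in> carrier_mat n n" using A W by auto
  have "transpose_mat (transpose_mat W * A * W)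
      = transpose_mat W * transpose_mat (transpose_mat W * A)"
    using transpose_mult[OF WA W] .
  also have "\<dots> = transpose_mat W * (transpose_mat A * W)"
    using A W by (subst transpose_mult[of _ n n]) auto
  finally show ?thesis using A W sym by (simp add: assoc_mult_mat[of _ n n _ n _ n])
qed

text \<open>Conjugating by an orthonormal matrix with a unit eigenvector as first column clears the
  first column; symmetry then clears the first row as well.\<close>

lemma symmetric_mat_deflation:
  fixes A :: "real mat"
  assumes A: "A \<in> carrier_mat (Suc m) (Suc m)" and sym: "transpose_mat A = A"
    and e: "eigenvalue A e"
  obtains W A3 where "orthonormal_mat (Suc m) W" "A3 \<in> carrier_mat m m" "transpose_mat A3 = A3"
    "transpose_mat W * A * W = four_block_mat (mat 1 1 (\<lambda>_. e)) (0\<^sub>m 1 m) (0\<^sub>m m 1) A3"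
proof -
  let ?n = "Suc m"
  obtain v where v: "v \<in> carrier_vec ?n" "v \<noteq> 0\<^sub>v ?n" and Av: "A *\<^sub>v v = e \<cdot>\<^sub>v v"
    using e A unfolding eigenvalue_def eigenvector_def by auto
  have vpos: "v \<bullet> v > 0" using conjugate_square_greater_0_vec[OF v(1)] v(2) by simp
  define u where "u = (1 / sqrt (v \<bullet> v)) \<cdot>\<^sub>v v"
  have u: "u \<in> carrier_vec ?n" using v unfolding u_def by auto
  have u1: "u \<bullet> u = 1" unfolding u_def using v vpos
    by (simp add: smult_scalar_prod_distrib scalar_prod_smult_distrib[of _ ?n])
  have Au: "A *\<^sub>v u = e \<cdot>\<^sub>v u" unfolding u_def using A v Av
    by (simp add: mult_mat_vec smult_smult_assoc mult.commute)
  obtain W where W: "orthonormal_mat ?n W" and W0: "col W 0 = u"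
    using orthonormal_mat_with_first_col[OF u u1] by auto
  have Wc: "W \<in> carrier_mat ?n ?n" using W unfolding orthonormal_mat_def by auto
  define A' where "A' = transpose_mat W * A * W"
  have A': "A' \<in> carrier_mat ?n ?n" unfolding A'_def using A Wc by auto
  have symA': "transpose_mat A' = A'"
    unfolding A'_def by (rule symmetric_congruence[OF A sym Wc])
  have A'col: "A' $$ (i, 0) = (if i = 0 then e else 0)" if i: "i < ?n" for i
  proof -
    have "A' $$ (i, 0) = col W i \<bullet> (A *\<^sub>v col W 0)"
      unfolding A'_def using A Wc i
      by (simp add: assoc_mult_mat[of _ ?n ?n _ ?n _ ?n] mult_mat_vec_def)
    also have "\<dots> = e * (transpose_mat W * W) $$ (i, 0)"
      using Au W0 Wc i u by (simp add: scalar_prod_smult_distrib[of _ ?n])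
    finally show ?thesis using W i unfolding orthonormal_mat_def by simp
  qed
  have A'sym: "A' $$ (i, j) = A' $$ (j, i)" if "i < ?n" "j < ?n" for i j
    using that A' by (metis carrier_matD index_transpose_mat(1) symA')
  have A'row: "A' $$ (0, j) = (if j = 0 then e else 0)" if "j < ?n" for j
    using A'col[OF that] A'sym[OF _ that] by auto
  define A3 where "A3 = mat m m (\<lambda>(i, j). A' $$ (Suc i, Suc j))"
  have "transpose_mat A3 = A3"
    unfolding A3_def using A'sym by (intro eq_matI) auto
  moreover have "A3 \<in> carrier_mat m m" unfolding A3_def by simp
  moreover have "A' = four_block_mat (mat 1 1 (\<lambda>_. e)) (0\<^sub>m 1 m) (0\<^sub>m m 1) A3"
    using A' A'col A'row by (intro eq_matI) (auto simp: A3_def)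
  ultimately show ?thesis using that[OF W] unfolding A'_def by blast
qed

lemma char_poly_eigenvalue_block:
  assumes "A3 \<in> carrier_mat m m"
  shows "char_poly (four_block_mat (mat 1 1 (\<lambda>_. e)) (0\<^sub>m 1 m) (0\<^sub>m m 1) A3)
    = [:- e, 1:] * char_poly A3"
  using assms
  by (subst char_poly_four_block_zeros_col) (auto simp: char_poly_defs det_def sign_def)

lemma four_block_congruence:
  fixes A1 A3 P :: "'a :: comm_semiring_1 mat"
  assumes A1: "A1 \<in> carrier_mat 1 1" and A3: "A3 \<in> carrier_mat m m" and P: "P \<in> carrier_mat m m"
  defines "Pb \<equiv> four_block_mat (1\<^sub>m 1) (0\<^sub>m 1 m) (0\<^sub>m m 1) P"
  shows "transpose_mat Pb * four_block_mat A1 (0\<^sub>m 1 m) (0\<^sub>m m 1) A3 * Pb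
    = four_block_mat A1 (0\<^sub>m 1 m) (0\<^sub>m m 1) (transpose_mat P * A3 * P)"
proof -
  have "transpose_mat Pb = four_block_mat (1\<^sub>m 1) (0\<^sub>m 1 m) (0\<^sub>m m 1) (transpose_mat P)"
    unfolding Pb_def using P by (subst transpose_four_block_mat) auto
  then show ?thesis unfolding Pb_def using A1 A3 P
    by (simp add: mult_four_block_mat[of _ 1 1 _ m _ m _ _ 1 _ m])
qed

theorem real_symmetric_mat_diagonalization:
  fixes A :: "real mat"
  assumes "A \<in> carrier_mat n n" and "transpose_mat A = A"
    and "char_poly A = (\<Prod>e\<leftarrow>es. [:- e, 1:])"
  shows "\<exists>P. orthonormal_mat n P \<and>
    transpose_mat P * A * P = mat n n (\<lambda>(i, j). if i = j then es ! i else 0)"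
  using assms
proof (induction es arbitrary: n A)
  case Nil
  then have "n = 0" using degree_monic_char_poly[of A n] by auto
  then show ?case using Nil unfolding orthonormal_mat_def
    by (intro exI[of _ "1\<^sub>m 0"]) (auto intro!: eq_matI)
next
  case (Cons e es n A)
  obtain m where n: "n = Suc m"
    using degree_monic_char_poly[OF Cons(2)] Cons(4) degree_linear_factors[of uminus "e # es"]
    by auto
  have A: "A \<in> carrier_mat (Suc m) (Suc m)" using Cons(2) n by simp
  have "eigenvalue A e" using Cons(4) by (simp add: eigenvalue_root_char_poly[OF A])
  then obtain W A3 where W: "orthonormal_mat (Suc m) W" and A3: "A3 \<in> carrier_mat m m"
    and symA3: "transpose_mat A3 = A3"
    and WAW: "transpose_mat W * A * W
      = four_block_mat (mat 1 1 (\<lambda>_. e)) (0\<^sub>m 1 m) (0\<^sub>m m 1) A3"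
    using symmetric_mat_deflation[OF A Cons(3)] by blast
  have "char_poly (transpose_mat W * A * W) = char_poly A"
  proof (rule char_poly_similar)
    show "similar_mat (transpose_mat W * A * W) A"
      unfolding similar_mat_def
      by (rule exI[of _ "transpose_mat W"], rule exI[of _ W])
        (use W A orthonormal_mat_right_inverse[OF W] in
          \<open>auto simp: orthonormal_mat_def similar_mat_wit_def Let_def\<close>)
  qed
  then have "[:- e, 1:] * char_poly A3 = [:- e, 1:] * (\<Prod>e\<leftarrow>es. [:- e, 1:])"
    using Cons(4) char_poly_eigenvalue_block[OF A3] WAW by simp
  then have "char_poly A3 = (\<Prod>e\<leftarrow>es. [:- e, 1:])"
    by (metis mult_cancel_left pCons_eq_0_iff zero_neq_one)
  then obtain P3 where P3: "orthonormal_mat m P3"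
    and P3A3: "transpose_mat P3 * A3 * P3 = mat m m (\<lambda>(i, j). if i = j then es ! i else 0)"
    using Cons.IH[OF A3 symA3] by blast
  define Pb where "Pb = four_block_mat (1\<^sub>m 1) (0\<^sub>m 1 m) (0\<^sub>m m 1) P3"
  have Pb: "orthonormal_mat (Suc m) Pb"
    unfolding Pb_def by (rule orthonormal_mat_four_block[OF P3])
  have Wc: "W \<in> carrier_mat (Suc m) (Suc m)" and Pbc: "Pb \<in> carrier_mat (Suc m) (Suc m)"
    and P3c: "P3 \<in> carrier_mat m m"
    using W Pb P3 unfolding orthonormal_mat_def by auto
  have "transpose_mat (W * Pb) * A * (W * Pb)
      = transpose_mat Pb * (transpose_mat W * A * W) * Pb"
    using Wc Pbc A by (simp add: transpose_mult[of _ "Suc m" "Suc m"]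
        assoc_mult_mat[of _ "Suc m" "Suc m" _ "Suc m" _ "Suc m"])
  also have "\<dots> = four_block_mat (mat 1 1 (\<lambda>_. e)) (0\<^sub>m 1 m) (0\<^sub>m m 1)
      (transpose_mat P3 * A3 * P3)"
    unfolding WAW Pb_def by (rule four_block_congruence[OF _ A3 P3c]) simp
  also have "\<dots> = mat (Suc m) (Suc m) (\<lambda>(i, j). if i = j then (e # es) ! i else 0)"
    unfolding P3A3 by (intro eq_matI) (auto simp: nth_Cons')
  finally show ?case unfolding n using orthonormal_mat_mult[OF W Pb] by blast
qed

definition orthogonal_array :: "nat \<Rightarrow> (nat \<Rightarrow> nat \<Rightarrow> real) \<Rightarrow> bool" where
  "orthogonal_array n p \<longleftrightarrow>
     (\<forall>i<n. \<forall>j<n. (\<Sum>a<n. p a i * p a j) = (if i = j then 1 else 0)) \<and>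
     (\<forall>a<n. \<forall>b<n. (\<Sum>j<n. p a j * p b j) = (if a = b then 1 else 0))"

text \<open>\<open>p a j\<close> is the \<open>a\<close>-th coordinate of the \<open>j\<close>-th eigenvector.\<close>

definition orthonormal_eigenbasis ::
    "nat \<Rightarrow> real mat \<Rightarrow> (nat \<Rightarrow> real) \<Rightarrow> (nat \<Rightarrow> nat \<Rightarrow> real) \<Rightarrow> bool" where
  "orthonormal_eigenbasis n A lam p \<longleftrightarrow> orthogonal_array n p \<and>
     (\<forall>a<n. \<forall>j<n. (\<Sum>b<n. A $$ (a, b) * p b j) = lam j * p a j)"

lemma index_mult_mat_sum:
  fixes X Y :: "'a :: comm_semiring_0 mat"
  assumes "X \<in> carrier_mat nr n" "Y \<in> carrier_mat n nc" "i < nr" "j < nc"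
  shows "(X * Y) $$ (i, j) = (\<Sum>k<n. X $$ (i, k) * Y $$ (k, j))"
  using assms by (simp add: scalar_prod_def atLeast0LessThan)

lemma real_symmetric_mat_orthonormal_eigenbasis:
  fixes A :: "real mat"
  assumes A: "A \<in> carrier_mat n n" and "transpose_mat A = A"
    and "char_poly A = (\<Prod>e\<leftarrow>es. [:- e, 1:])"
  shows "\<exists>p. orthonormal_eigenbasis n A (\<lambda>j. es ! j) p"
proof -
  obtain P where P: "orthonormal_mat n P"
    and PAP: "transpose_mat P * A * P = mat n n (\<lambda>(i, j). if i = j then es ! i else 0)"
    using real_symmetric_mat_diagonalization[OF assms] by blast
  have Pc: "P \<in> carrier_mat n n" and PtP: "transpose_mat P * P = 1\<^sub>m n"
    using P unfolding orthonormal_mat_def by auto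
  have PPt: "P * transpose_mat P = 1\<^sub>m n" using orthonormal_mat_right_inverse[OF P] .
  have AP: "A * P = P * mat n n (\<lambda>(i, j). if i = j then es ! i else 0)"
  proof -
    have "A * P = P * transpose_mat P * A * P" using PPt A Pc by simp
    then show ?thesis unfolding PAP[symmetric] using A Pc
      by (simp add: assoc_mult_mat[of _ n n _ n _ n])
  qed
  define p where "p a j = P $$ (a, j)" for a j
  have "(\<Sum>a<n. p a i * p a j) = (transpose_mat P * P) $$ (i, j)" if "i < n" "j < n" for i j
    unfolding p_def using that Pc by (subst index_mult_mat_sum[of _ n n]) auto
  moreover have "(\<Sum>j<n. p a j * p b j) = (P * transpose_mat P) $$ (a, b)"
    if "a < n" "b < n" for a b
    unfolding p_def using that Pc by (subst index_mult_mat_sum[of _ n n]) auto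
  ultimately have "orthogonal_array n p"
    unfolding orthogonal_array_def PtP PPt by simp
  moreover have "(\<Sum>b<n. A $$ (a, b) * p b j) = es ! j * p a j" if "a < n" "j < n" for a j
  proof -
    have "(\<Sum>b<n. A $$ (a, b) * p b j) = (A * P) $$ (a, j)"
      unfolding p_def using that A Pc by (subst index_mult_mat_sum[of _ n n]) auto
    also have "\<dots> = (\<Sum>i<n. p a i * (if i = j then es ! i else 0))"
      unfolding AP p_def using that Pc by (subst index_mult_mat_sum[of _ n n]) auto
    also have "\<dots> = es ! j * p a j" using that(2) by (simp add: if_distrib cong: if_cong)
    finally show ?thesis .
  qed
  ultimately show ?thesis unfolding orthonormal_eigenbasis_def by blast
qed

lemma eigenbasis_expansion:
  assumes p: "orthonormal_eigenbasis n A lam p" and a: "a < n" and b: "b < n"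
  shows "A $$ (a, b) = (\<Sum>j<n. lam j * p a j * p b j)"
proof -
  have "(\<Sum>j<n. lam j * p a j * p b j) = (\<Sum>j<n. (\<Sum>c<n. A $$ (a, c) * p c j) * p b j)"
    using p a unfolding orthonormal_eigenbasis_def by (intro sum.cong) auto
  also have "\<dots> = (\<Sum>c<n. A $$ (a, c) * (\<Sum>j<n. p c j * p b j))"
    by (simp add: sum_distrib_left sum_distrib_right mult.assoc) (rule sum.swap)
  also have "\<dots> = (\<Sum>c<n. A $$ (a, c) * (if c = b then 1 else 0))"
    using p b unfolding orthonormal_eigenbasis_def orthogonal_array_def by (intro sum.cong) auto
  also have "\<dots> = A $$ (a, b)" using b by (simp add: if_distrib cong: if_cong)
  finally show ?thesis ..
qed

lemma eigenbasis_pair_form: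
  assumes p: "orthonormal_eigenbasis n A lam p" and "u < n" "v < n"
  shows "A $$ (u, u) + A $$ (v, v) - A $$ (u, v) - A $$ (v, u)
    = (\<Sum>j<n. lam j * (p u j - p v j)^2)"
proof -
  have "(\<Sum>j<n. lam j * (p u j - p v j)^2) = (\<Sum>j<n. lam j * p u j * p u j
      + lam j * p v j * p v j - lam j * p u j * p v j - lam j * p v j * p u j)"
    by (intro sum.cong) (simp_all add: power2_eq_square algebra_simps)
  also have "\<dots> = (\<Sum>j<n. lam j * p u j * p u j) + (\<Sum>j<n. lam j * p v j * p v j)
      - (\<Sum>j<n. lam j * p u j * p v j) - (\<Sum>j<n. lam j * p v j * p u j)"
    by (simp only: sum.distrib sum_subtractf)
  finally show ?thesis using assms by (simp add: eigenbasis_expansion[OF p])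
qed

lemma sum_pairs_sq_diff:
  fixes x :: "nat \<Rightarrow> real"
  shows "(\<Sum>u<n. \<Sum>v<n. (x u - x v)^2) = 2 * real n * (\<Sum>u<n. (x u)^2) - 2 * (\<Sum>u<n. x u)^2"
  by (simp add: power2_eq_square algebra_simps sum_subtractf sum.distrib sum_distrib_left
      sum_distrib_right)

lemma orthogonal_array_pair_sq_diff:
  assumes p: "orthogonal_array n p" and "u < n" "v < n" "u \<noteq> v"
  shows "(\<Sum>j<n. (p u j - p v j)^2) = 2"
proof -
  have "(\<Sum>j<n. (p u j - p v j)^2)
      = (\<Sum>j<n. p u j * p u j) + (\<Sum>j<n. p v j * p v j) - 2 * (\<Sum>j<n. p u j * p v j)"
    by (simp add: power2_eq_square algebra_simps sum_subtractf sum.distrib sum_distrib_left)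
  then show ?thesis using p assms unfolding orthogonal_array_def by simp
qed

lemma orthogonal_array_col_sums_sq:
  assumes p: "orthogonal_array n p"
  shows "(\<Sum>j<n. (\<Sum>a<n. p a j)^2) = real n"
proof -
  have "(\<Sum>j<n. (\<Sum>a<n. p a j)^2) = (\<Sum>j<n. \<Sum>a<n. \<Sum>b<n. p a j * p b j)"
    by (simp add: power2_eq_square sum_product)
  also have "\<dots> = (\<Sum>a<n. \<Sum>b<n. \<Sum>j<n. p a j * p b j)"
    by (subst sum.swap, subst (2) sum.swap) (rule refl)
  also have "\<dots> = (\<Sum>a<n. \<Sum>b<n. if a = b then 1 else 0)"
    using p unfolding orthogonal_array_def by (intro sum.cong) auto
  finally show ?thesis by simp
qed

lemma sum_smallest_le_weighted_sum:
  fixes l r :: "nat \<Rightarrow> real"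
  assumes mono: "\<And>i j. i \<le> j \<Longrightarrow> j < n \<Longrightarrow> l i \<le> l j"
    and r0: "\<And>j. j < n \<Longrightarrow> 0 \<le> r j" and r1: "\<And>j. j < n \<Longrightarrow> r j \<le> 1"
    and rs: "(\<Sum>j<n. r j) = real k" and k: "1 \<le> k" "k \<le> n"
  shows "(\<Sum>j<k. l j) \<le> (\<Sum>j<n. l j * r j)"
proof -
  have ivl: "{..<n} = {..<k} \<union> {k..<n}" using k by auto
  have "(\<Sum>j<k. l (k-1) * (r j - 1)) \<le> (\<Sum>j<k. l j * (r j - 1))"
    using mono r1 k by (intro sum_mono mult_right_mono_neg) auto
  moreover have "(\<Sum>j\<in>{k..<n}. l (k-1) * r j) \<le> (\<Sum>j\<in>{k..<n}. l j * r j)"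
    using mono r0 k by (intro sum_mono mult_right_mono) auto
  moreover have "(\<Sum>j<k. l (k-1) * (r j - 1)) + (\<Sum>j\<in>{k..<n}. l (k-1) * r j)
      = l (k-1) * ((\<Sum>j<n. r j) - real k)"
    unfolding ivl
    by (subst sum.union_disjoint)
      (auto simp: algebra_simps sum_subtractf sum_distrib_left sum_distrib_right)
  then have "(\<Sum>j<k. l (k-1) * (r j - 1)) + (\<Sum>j\<in>{k..<n}. l (k-1) * r j) = 0"
    using rs by simp
  moreover have "(\<Sum>j<n. l j * r j) - (\<Sum>j<k. l j)
      = (\<Sum>j<k. l j * (r j - 1)) + (\<Sum>j\<in>{k..<n}. l j * r j)"
    unfolding ivl by (subst sum.union_disjoint) (auto simp: algebra_simps sum_subtractf)
  ultimately show ?thesis by linarith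
qed

lemma sum_smallest_le_pair_average:
  fixes lam :: "nat \<Rightarrow> real" and p :: "nat \<Rightarrow> nat \<Rightarrow> real"
  assumes mono: "\<And>i j. i \<le> j \<Longrightarrow> j < n \<Longrightarrow> lam i \<le> lam j"
    and p: "orthogonal_array n p"
    and ones: "\<And>j. j < n \<Longrightarrow> lam j * (\<Sum>a<n. p a j) = 0"
    and M0: "M0 \<subseteq> {(u, v). u < n \<and> v < n \<and> u \<noteq> v}" and card: "card M0 = n * (k - 1)"
    and k: "1 \<le> k" "k \<le> n"
  shows "(\<Sum>j<k. lam j) \<le> (\<Sum>(u, v)\<in>M0. \<Sum>j<n. lam j * (p u j - p v j)^2) / (2 * real n)"
proof -
  define c where "c j = (\<Sum>(u, v)\<in>M0. (p u j - p v j)^2)" for j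
  define s where "s j = (\<Sum>a<n. p a j)" for j
  define r where "r j = c j / (2 * real n) + (s j)^2 / real n" for j
  have n: "real n > 0" using k by simp
  have "(\<Sum>j<n. c j) = (\<Sum>(u, v)\<in>M0. \<Sum>j<n. (p u j - p v j)^2)"
    unfolding c_def by (subst sum.swap) (simp add: case_prod_beta)
  also have "\<dots> = (\<Sum>(u, v)\<in>M0. 2)"
    using M0 by (intro sum.cong) (auto simp: orthogonal_array_pair_sq_diff[OF p])
  finally have "(\<Sum>j<n. c j) = 2 * real (card M0)" by simp
  then have "(\<Sum>j<n. r j) = real k"
    using n card k orthogonal_array_col_sums_sq[OF p]
    by (simp add: r_def s_def sum.distrib sum_divide_distrib[symmetric] of_nat_diff)
  moreover have "r j \<le> 1" if j: "j < n" for j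
  proof -
    have "c j \<le> (\<Sum>(u, v)\<in>{..<n} \<times> {..<n}. (p u j - p v j)^2)"
      unfolding c_def using M0 by (intro sum_mono2) auto
    also have "\<dots> = 2 * real n * (\<Sum>u<n. (p u j)^2) - 2 * (s j)^2"
      unfolding s_def sum_pairs_sq_diff[symmetric] by (simp add: sum.cartesian_product)
    also have "(\<Sum>u<n. (p u j)^2) = 1"
      using p j unfolding orthogonal_array_def by (simp add: power2_eq_square)
    finally show ?thesis using n unfolding r_def by (simp add: field_simps)
  qed
  moreover have "r j \<ge> 0" for j
    unfolding r_def c_def by (intro add_nonneg_nonneg divide_nonneg_nonneg sum_nonneg) auto
  ultimately have "(\<Sum>j<k. lam j) \<le> (\<Sum>j<n. lam j * r j)"
    using mono k by (intro sum_smallest_le_weighted_sum[where l = lam]) auto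
  also have "\<dots> = (\<Sum>j<n. lam j * c j) / (2 * real n)"
    using ones unfolding r_def s_def sum_divide_distrib
    by (intro sum.cong) (auto simp: algebra_simps power2_eq_square)
  also have "(\<Sum>j<n. lam j * c j) = (\<Sum>(u, v)\<in>M0. \<Sum>j<n. lam j * (p u j - p v j)^2)"
    unfolding c_def sum_distrib_left by (subst sum.swap) (simp add: case_prod_beta)
  finally show ?thesis .
qed

lemma deg_eq_sum_adj:
  assumes "simple_graph n E"
  shows "real (deg n E u) = (\<Sum>v<n. adj E u v)"
proof -
  have "{v. v < n \<and> E u v} = {..<n} \<inter> {v. E u v}" by auto
  then show ?thesis
    unfolding deg_def adj_def by (simp add: sum.If_cases)
qed

lemma laplacian_carrier: "laplacian n E \<in> carrier_mat n n"
  unfolding laplacian_def by simp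

lemma laplacian_index:
  assumes "a < n" "b < n"
  shows "laplacian n E $$ (a, b) = (if a = b then real (deg n E a) else 0) - adj E a b"
  using assms unfolding laplacian_def by simp

lemma laplacian_index_sym:
  assumes "simple_graph n E" "a < n" "b < n"
  shows "laplacian n E $$ (a, b) = laplacian n E $$ (b, a)"
  using assms unfolding simple_graph_def by (auto simp: laplacian_index adj_def)

lemma laplacian_symmetric:
  assumes "simple_graph n E"
  shows "transpose_mat (laplacian n E) = laplacian n E"
  using laplacian_carrier[of n E] laplacian_index_sym[OF assms] by (intro eq_matI) auto

lemma laplacian_row_sum:
  assumes "simple_graph n E" "a < n"
  shows "(\<Sum>b<n. laplacian n E $$ (a, b)) = 0"
proof -
  have "(\<Sum>b<n. laplacian n E $$ (a, b))
      = (\<Sum>b<n. if a = b then real (deg n E a) else 0) - (\<Sum>b<n. adj E a b)"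
    by (simp add: laplacian_index assms(2) sum_subtractf)
  then show ?thesis using assms by (simp add: deg_eq_sum_adj)
qed

lemma laplacian_quadratic_form:
  fixes x :: "nat \<Rightarrow> real"
  assumes G: "simple_graph n E"
  shows "(\<Sum>a<n. x a * (\<Sum>b<n. laplacian n E $$ (a, b) * x b))
    = (\<Sum>a<n. \<Sum>b<n. adj E a b * (x a - x b)^2) / 2"
proof -
  have adj_sym: "adj E a b = adj E b a" for a b
    using G unfolding simple_graph_def adj_def by metis
  have "(\<Sum>b<n. laplacian n E $$ (a, b) * x b)
      = real (deg n E a) * x a - (\<Sum>b<n. adj E a b * x b)" if "a < n" for a
  proof -
    have "(\<Sum>b<n. laplacian n E $$ (a, b) * x b)
        = (\<Sum>b<n. (if a = b then real (deg n E a) * x b else 0) - adj E a b * x b)"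
      using that by (intro sum.cong) (auto simp: laplacian_index left_diff_distrib)
    then show ?thesis using that by (simp add: sum_subtractf)
  qed
  then have "(\<Sum>a<n. x a * (\<Sum>b<n. laplacian n E $$ (a, b) * x b))
      = (\<Sum>a<n. x a * ((\<Sum>b<n. adj E a b) * x a - (\<Sum>b<n. adj E a b * x b)))"
    by (simp add: deg_eq_sum_adj[OF G])
  also have "\<dots> = (\<Sum>a<n. \<Sum>b<n. adj E a b * x a * x a)
      - (\<Sum>a<n. \<Sum>b<n. adj E a b * x a * x b)"
    by (simp add: algebra_simps sum_subtractf sum_distrib_left sum_distrib_right)
  finally have "(\<Sum>a<n. x a * (\<Sum>b<n. laplacian n E $$ (a, b) * x b))
      = (\<Sum>a<n. \<Sum>b<n. adj E a b * x a * x a) - (\<Sum>a<n. \<Sum>b<n. adj E a b * x a * x b)" .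
  moreover have "(\<Sum>a<n. \<Sum>b<n. adj E a b * x b * x b)
      = (\<Sum>a<n. \<Sum>b<n. adj E a b * x a * x a)"
    by (subst sum.swap) (simp add: adj_sym)
  moreover have "(\<Sum>a<n. \<Sum>b<n. adj E a b * (x a - x b)^2)
      = (\<Sum>a<n. \<Sum>b<n. adj E a b * x a * x a) + (\<Sum>a<n. \<Sum>b<n. adj E a b * x b * x b)
        - 2 * (\<Sum>a<n. \<Sum>b<n. adj E a b * x a * x b)"
    by (simp add: power2_eq_square algebra_simps sum_subtractf sum.distrib sum_distrib_left)
  ultimately show ?thesis by simp
qed

lemma laplacian_pair_entries:
  assumes G: "simple_graph n E" and "u < n" "v < n" "u \<noteq> v"
  shows "laplacian n E $$ (u, u) + laplacian n E $$ (v, v) - laplacian n E $$ (u, v)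
      - laplacian n E $$ (v, u) = real (deg n E u) + real (deg n E v) + 2 * adj E u v"
proof -
  have "adj E v u = adj E u v" "adj E u u = 0" "adj E v v = 0"
    using G unfolding simple_graph_def adj_def by auto
  then show ?thesis using assms by (simp add: laplacian_index)
qed

lemma laplacian_eigenvalue_nonneg:
  assumes G: "simple_graph n E" and p: "orthonormal_eigenbasis n (laplacian n E) lam p"
    and j: "j < n"
  shows "0 \<le> lam j"
proof -
  have "lam j = (\<Sum>a<n. p a j * (lam j * p a j))"
    using p j unfolding orthonormal_eigenbasis_def orthogonal_array_def
    by (simp add: sum_distrib_left[symmetric] algebra_simps)
  also have "\<dots> = (\<Sum>a<n. p a j * (\<Sum>b<n. laplacian n E $$ (a, b) * p b j))"
    using p j unfolding orthonormal_eigenbasis_def by simp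
  also have "\<dots> \<ge> 0"
    unfolding laplacian_quadratic_form[OF G]
    by (intro divide_nonneg_nonneg sum_nonneg mult_nonneg_nonneg) (auto simp: adj_def)
  finally show ?thesis .
qed

lemma laplacian_eigenvector_sum:
  assumes G: "simple_graph n E" and p: "orthonormal_eigenbasis n (laplacian n E) lam p"
    and j: "j < n"
  shows "lam j * (\<Sum>a<n. p a j) = 0"
proof -
  have "lam j * (\<Sum>a<n. p a j) = (\<Sum>a<n. \<Sum>b<n. laplacian n E $$ (a, b) * p b j)"
    using p j unfolding orthonormal_eigenbasis_def by (simp add: sum_distrib_left mult.commute)
  also have "\<dots> = (\<Sum>b<n. p b j * (\<Sum>a<n. laplacian n E $$ (b, a)))"
    by (subst sum.swap) (auto simp: sum_distrib_left mult.commute laplacian_index_sym[OF G]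
        intro!: sum.cong)
  also have "\<dots> = 0" by (simp add: laplacian_row_sum[OF G])
  finally show ?thesis .
qed

theorem mainTheorem5:
  fixes n k :: nat and E :: "nat \<Rightarrow> nat \<Rightarrow> bool" and lam :: "real list"
    and M0 :: "(nat \<times> nat) set"
  assumes "simple_graph n E" and "connected_graph n E"
    and "eigenvalues_sorted (laplacian n E) lam"
    and "1 \<le> k" and "k < n"
    and "M0 \<subseteq> {(u, v). u < n \<and> v < n \<and> u \<noteq> v}"
    and "card M0 = n * (k - 1)"
  shows "(\<Sum>j = 1..k - 1. lam ! j)
         \<le> (1 / (2 * real n)) * (\<Sum>(u, v)\<in>M0. real (deg n E u) + real (deg n E v) + 2 * adj E u v)"
proof -
  note G = assms(1) and M0 = assms(6)
  have sorted: "sorted lam" and len: "length lam = n"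
    and cp: "char_poly (laplacian n E) = (\<Prod>e\<leftarrow>lam. [:- e, 1:])"
    using assms(3) unfolding eigenvalues_sorted_def by (auto simp: laplacian_def)
  obtain p where p: "orthonormal_eigenbasis n (laplacian n E) (\<lambda>j. lam ! j) p"
    using real_symmetric_mat_orthonormal_eigenbasis[OF laplacian_carrier laplacian_symmetric[OF G]]
      cp by blast
  have "{..<k} = insert 0 {1..k - 1}" using assms(4) by auto
  then have "(\<Sum>j = 1..k - 1. lam ! j) \<le> (\<Sum>j<k. lam ! j)"
    using laplacian_eigenvalue_nonneg[OF G p, of 0] assms(5) by simp
  also have "\<dots> \<le> (\<Sum>(u, v)\<in>M0. \<Sum>j<n. lam ! j * (p u j - p v j)^2) / (2 * real n)"
    using p sorted len assms(4,5,7) M0 laplacian_eigenvector_sum[OF G p]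
    by (intro sum_smallest_le_pair_average)
      (auto simp: orthonormal_eigenbasis_def sorted_nth_mono)
  also have "\<dots> = (1 / (2 * real n))
      * (\<Sum>(u, v)\<in>M0. real (deg n E u) + real (deg n E v) + 2 * adj E u v)"
    using M0 by (auto simp: eigenbasis_pair_form[OF p, symmetric] laplacian_pair_entries[OF G]
        intro!: sum.cong)
  finally show ?thesis .
qed

end
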